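(* Every finite connected chordal graph can be reduced through a sequence of erasures to a tree.
   Context: All graphs are finite, undirected, simple. A graph is chordal if every induced cycle has length three. A facet edge of $G$ is an edge $xy$ such that $\{x,y\}$ is a maximal clique of $G$. An edge of $G$ is exposed if it is contained in a unique maximal clique of $G$ and it is not a facet edge. For graphs $G,H$ on the same vertex set, $H$ is obtained from $G$ through an erasure if $G$ contains an exposed edge $e$ with $H=G-e$. *)

theory Defs
  imports Main
begin

definition simple_graph :: "'a set \<Rightarrow> 'a set set \<Rightarrow> bool" where
  "simple_graph V E \<longleftrightarrow> finite V \<and>
     (\<forall>e\<in>E. \<exists>x y. x \<noteq> y \<and> x \<in> V \<and> y \<in> V \<and> e = {x, y})"

definition adj :: "'a set set \<Rightarrow> 'a \<Rightarrow> 'a \<Rightarrow> bool" where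
  "adj E x y \<longleftrightarrow> {x, y} \<in> E"

definition connected_graph :: "'a set \<Rightarrow> 'a set set \<Rightarrow> bool" where
  "connected_graph V E \<longleftrightarrow> V \<noteq> {} \<and> (\<forall>u\<in>V. \<forall>v\<in>V. (adj E)\<^sup>*\<^sup>* u v)"

definition is_cycle :: "'a set \<Rightarrow> 'a set set \<Rightarrow> 'a list \<Rightarrow> bool" where
  "is_cycle V E cs \<longleftrightarrow> length cs \<ge> 3 \<and> distinct cs \<and> set cs \<subseteq> V \<and>
     (\<forall>i < length cs. adj E (cs ! i) (cs ! ((i + 1) mod length cs)))"

definition is_induced_cycle :: "'a set \<Rightarrow> 'a set set \<Rightarrow> 'a list \<Rightarrow> bool" where
  "is_induced_cycle V E cs \<longleftrightarrow> is_cycle V E cs \<and>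
     (\<forall>i < length cs. \<forall>j < length cs. adj E (cs ! i) (cs ! j) \<longrightarrow>
        j = (i + 1) mod length cs \<or> i = (j + 1) mod length cs)"

definition chordal :: "'a set \<Rightarrow> 'a set set \<Rightarrow> bool" where
  "chordal V E \<longleftrightarrow> (\<forall>cs. is_induced_cycle V E cs \<longrightarrow> length cs = 3)"

definition acyclic_graph :: "'a set \<Rightarrow> 'a set set \<Rightarrow> bool" where
  "acyclic_graph V E \<longleftrightarrow> \<not> (\<exists>cs. is_cycle V E cs)"

definition is_tree :: "'a set \<Rightarrow> 'a set set \<Rightarrow> bool" where
  "is_tree V E \<longleftrightarrow> connected_graph V E \<and> acyclic_graph V E"

definition is_clique :: "'a set \<Rightarrow> 'a set set \<Rightarrow> 'a set \<Rightarrow> bool" where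
  "is_clique V E C \<longleftrightarrow> C \<subseteq> V \<and> (\<forall>x\<in>C. \<forall>y\<in>C. x \<noteq> y \<longrightarrow> adj E x y)"

definition maximal_clique :: "'a set \<Rightarrow> 'a set set \<Rightarrow> 'a set \<Rightarrow> bool" where
  "maximal_clique V E C \<longleftrightarrow> is_clique V E C \<and>
     (\<forall>D. is_clique V E D \<and> C \<subseteq> D \<longrightarrow> D = C)"

definition facet_edge :: "'a set \<Rightarrow> 'a set set \<Rightarrow> 'a set \<Rightarrow> bool" where
  "facet_edge V E e \<longleftrightarrow> e \<in> E \<and> maximal_clique V E e"

definition exposed_edge :: "'a set \<Rightarrow> 'a set set \<Rightarrow> 'a set \<Rightarrow> bool" where
  "exposed_edge V E e \<longleftrightarrow> e \<in> E \<and>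
     (\<exists>!C. maximal_clique V E C \<and> e \<subseteq> C) \<and> \<not> facet_edge V E e"

definition erasure :: "'a set \<Rightarrow> 'a set set \<Rightarrow> 'a set set \<Rightarrow> bool" where
  "erasure V E E' \<longleftrightarrow> (\<exists>e. exposed_edge V E e \<and> E' = E - {e})"

end

theory Submission
  imports Defs
begin

text \<open>
  An edge xy is exposed exactly when the common neighbourhood of x and y is a nonempty clique.
  Erasing such an edge keeps the graph connected, since a common neighbour z gives the detour x z y,
  and chordal: a new induced cycle of length at least four must pass through x and y, the two
  arcs into which x and y cut it are closed by the erased edge to induced cycles of the old graph,
  hence triangles, so the new cycle is x a y b with a and b common neighbours of x and y, which
  are adjacent: a contradiction.

  A chordal graph containing a cycle has an exposed edge. Take an inclusion-maximal vertex set W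
  in which every vertex has two neighbours (it exists because of the cycle), a simplicial vertex u
  of the subgraph induced on W (Dirac) and a neighbour a of u in W. Every common neighbour of u
  and a lies in W by maximality, so it is a neighbour of u in W, and these form a clique.
  Erasing exposed edges as long as there is a cycle therefore ends in a tree.
\<close>

lemma adj_sym: "adj E x y \<longleftrightarrow> adj E y x"
  by (simp add: adj_def insert_commute)

lemma adj_irrefl: "simple_graph V E \<Longrightarrow> \<not> adj E x x"
  unfolding simple_graph_def adj_def by (metis doubleton_eq_iff)

lemma adj_in_vertices: "simple_graph V E \<Longrightarrow> adj E x y \<Longrightarrow> x \<in> V \<and> y \<in> V"
  unfolding simple_graph_def adj_def by (metis doubleton_eq_iff)

lemma adj_Diff_edge: "adj (E - {{x, y}}) a b \<longleftrightarrow> adj E a b \<and> {a, b} \<noteq> {x, y}"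
  by (auto simp: adj_def)

lemma finite_edges: "simple_graph V E \<Longrightarrow> finite E"
  unfolding simple_graph_def
    by (metis Pow_iff finite_Pow_iff finite_subset insert_subsetI empty_subsetI subsetI)

lemma simple_graph_Diff: "simple_graph V E \<Longrightarrow> simple_graph V (E - F)"
  by (simp add: simple_graph_def)

lemma successively_take: "successively P xs \<Longrightarrow> successively P (take n xs)"
  by (simp add: successively_conv_nth)

lemma successively_drop: "successively P xs \<Longrightarrow> successively P (drop n xs)"
  by (simp add: successively_conv_nth)

lemma successively_shortcut:
  assumes "successively P xs" "i < j" "j < length xs" "P (xs ! i) (xs ! j)"
  shows "successively P (take (Suc i) xs @ drop j xs)"
proof -
  have "last (take (Suc i) xs) = xs ! i" "hd (drop j xs) = xs ! j"
    using assms by (simp_all add: take_Suc_conv_app_nth hd_drop_conv_nth)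
  then show ?thesis
    using successively_take[OF assms(1)] successively_drop[OF assms(1)] assms(4)
    by (metis successively_append_iff)
qed

lemma successively_skip_repeat:
  assumes "successively P xs" "i < j" "j < length xs" "xs ! i = xs ! j"
  shows "successively P (take i xs @ drop j xs)"
proof (cases i)
  case 0
  then show ?thesis using successively_drop[OF assms(1)] by simp
next
  case (Suc k)
  then have "P (xs ! k) (xs ! j)"
    using assms successively_nth[OF assms(1), of k] by simp
  then show ?thesis using successively_shortcut[OF assms(1), of k j] Suc assms by simp
qed

lemma rtranclp_imp_walk:
  assumes "R\<^sup>*\<^sup>* a b"
  obtains xs where "successively R xs" "xs \<noteq> []" "hd xs = a" "last xs = b" "\<forall>z\<in>set xs. R\<^sup>*\<^sup>* a z"
  using assms
proof (induction arbitrary: thesis rule: converse_rtranclp_induct)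
  case base
  then show ?case by (metis last.simps list.sel(1) list.simps(3) rtranclp.rtrancl_refl
        set_ConsD empty_iff list.set(1) successively.simps(2))
next
  case (step a c)
  obtain xs where xs: "successively R xs" "xs \<noteq> []" "hd xs = c" "last xs = b" "\<forall>z\<in>set xs. R\<^sup>*\<^sup>* c z"
    using step.IH by blast
  have "successively R (a # xs)" using xs step.hyps(1) by (simp add: successively_Cons)
  moreover have "\<forall>z\<in>set (a # xs). R\<^sup>*\<^sup>* a z"
    using xs step.hyps(1) by (auto intro: converse_rtranclp_into_rtranclp)
  ultimately show ?case using xs step.prems[of "a # xs"] by simp
qed

definition induced_path :: "'a set set \<Rightarrow> 'a list \<Rightarrow> bool" where
  "induced_path E p \<longleftrightarrow> distinct p \<and> successively (adj E) p \<and>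
     (\<forall>i<length p. \<forall>j<length p. adj E (p ! i) (p ! j) \<longrightarrow> j = Suc i \<or> i = Suc j)"

lemma induced_path_cong:
  assumes "\<And>a b. a \<in> set p \<Longrightarrow> b \<in> set p \<Longrightarrow> adj E a b \<longleftrightarrow> adj E' a b"
  shows "induced_path E p \<longleftrightarrow> induced_path E' p"
proof -
  have "successively (adj E) p \<longleftrightarrow> successively (adj E') p"
    using assms by (intro successively_cong) auto
  then show ?thesis
    unfolding induced_path_def using assms by (metis nth_mem)
qed

lemma induced_path_take: "induced_path E p \<Longrightarrow> induced_path E (take n p)"
  by (auto simp: induced_path_def successively_conv_nth)

lemma induced_path_rev:
  assumes "induced_path E p"
  shows "induced_path E (rev p)"
proof -
  have "successively (adj E) (rev p)"
    using assms by (simp add: induced_path_def adj_sym[of E] successively_rev)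
  moreover have "j = Suc i \<or> i = Suc j"
    if "i < length p" "j < length p" "adj E (rev p ! i) (rev p ! j)" for i j
  proof -
    have "adj E (p ! (length p - Suc i)) (p ! (length p - Suc j))"
      using that by (simp add: rev_nth)
    then have "length p - Suc j = Suc (length p - Suc i) \<or>
        length p - Suc i = Suc (length p - Suc j)"
      using assms that by (simp add: induced_path_def)
    then show ?thesis using that by arith
  qed
  ultimately show ?thesis using assms by (simp add: induced_path_def)
qed

lemma not_induced_path_shortcut:
  assumes G: "simple_graph V E" and w: "successively (adj E) xs" and "\<not> induced_path E xs"
  obtains i j where "i < j" "j < length xs"
    "xs ! i = xs ! j \<or> adj E (xs ! i) (xs ! j) \<and> Suc i < j"
proof -
  have "\<exists>i j. i < j \<and> j < length xs \<and> (xs ! i = xs ! j \<or> adj E (xs ! i) (xs ! j) \<and> Suc i < j)"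
  proof (rule ccontr)
    assume none: "\<not> ?thesis"
    then have "distinct xs" unfolding distinct_conv_nth by (metis linorder_neqE_nat)
    moreover have "j = Suc i \<or> i = Suc j"
      if "i < length xs" "j < length xs" "adj E (xs ! i) (xs ! j)" for i j
      using none that adj_irrefl[OF G] adj_sym[of E] by (metis Suc_lessI linorder_neqE_nat)
    ultimately show False using assms(3) w by (simp add: induced_path_def)
  qed
  then show ?thesis using that by blast
qed

lemma walk_contains_induced_path:
  assumes G: "simple_graph V E" and w: "successively (adj E) xs" "xs \<noteq> []"
  obtains p where "induced_path E p" "p \<noteq> []" "hd p = hd xs" "last p = last xs" "set p \<subseteq> set xs"
  using w
proof (induction "length xs" arbitrary: xs rule: less_induct)
  case less
  let ?n = "length xs"
  have shorter: thesis
    if ys: "successively (adj E) ys" "length ys < ?n" "ys \<noteq> []" "hd ys = hd xs" "last ys = last xs"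
      "set ys \<subseteq> set xs" for ys
    using less.hyps[OF ys(2) _ ys(1,3)] less.prems(1) ys(4-6) by (metis subset_trans)
  show thesis
  proof (cases "induced_path E xs")
    case True
    then show ?thesis using less.prems by blast
  next
    case False
    then obtain i j where ij: "i < j" "j < ?n" and
        bad: "xs ! i = xs ! j \<or> adj E (xs ! i) (xs ! j) \<and> Suc i < j"
      using not_induced_path_shortcut[OF G less.prems(2)] by blast
    have drop_j: "drop j xs \<noteq> []" "last (drop j xs) = last xs" "hd (drop j xs) = xs ! j"
      using ij by (simp_all add: hd_drop_conv_nth)
    from bad show ?thesis
    proof
      assume eq: "xs ! i = xs ! j"
      have "hd (take i xs @ drop j xs) = hd xs"
        using ij eq less.prems(3) drop_j by (cases i) (auto simp: hd_append hd_conv_nth)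
      then show ?thesis
        using shorter[OF successively_skip_repeat[OF less.prems(2) ij eq]] ij drop_j
          set_take_subset[of i xs] set_drop_subset[of j xs] by auto
    next
      assume "adj E (xs ! i) (xs ! j) \<and> Suc i < j"
      then show ?thesis
        using shorter[OF successively_shortcut[OF less.prems(2) ij]] ij drop_j less.prems(3)
          set_take_subset[of "Suc i" xs] set_drop_subset[of j xs] by auto
    qed
  qed
qed

definition apex_path :: "'a set set \<Rightarrow> 'a \<Rightarrow> 'a list \<Rightarrow> bool" where
  "apex_path E x p \<longleftrightarrow> x \<notin> set p \<and> 2 \<le> length p \<and> induced_path E p \<and>
     adj E x (hd p) \<and> adj E x (last p) \<and> (\<forall>z\<in>set p. adj E x z \<longrightarrow> z = hd p \<or> z = last p)"

lemma apex_path_rev: "apex_path E x p \<Longrightarrow> apex_path E x (rev p)"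
  by (auto simp: apex_path_def induced_path_rev hd_rev last_rev)

lemma apex_path_adj_index:
  assumes ap: "apex_path E x p" and k: "k < length p" "adj E x (p ! k)"
  shows "k = 0 \<or> k = length p - 1"
proof -
  have ne: "p \<noteq> []" and dist: "distinct p" using ap by (auto simp: apex_path_def induced_path_def)
  then have "p ! k = p ! 0 \<or> p ! k = p ! (length p - 1)"
    using ap k by (auto simp: apex_path_def hd_conv_nth last_conv_nth)
  then show ?thesis
    using nth_eq_iff_index_eq[OF dist k(1)] ne by auto
qed

lemma induced_cycle_ConsD:
  assumes "is_induced_cycle V E (x # p)"
  shows "x \<in> V \<and> set p \<subseteq> V \<and> apex_path E x p"
proof -
  let ?n = "length p"
  have next_idx: "Suc i mod Suc ?n = (if i = ?n then 0 else Suc i)" if "i \<le> ?n" for i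
    using that by auto
  from assms have len: "2 \<le> ?n" and dist: "x \<notin> set p" "distinct p" and inV: "x \<in> V" "set p \<subseteq> V"
    and cyc: "\<And>i. i < Suc ?n \<Longrightarrow> adj E ((x # p) ! i) ((x # p) ! (Suc i mod Suc ?n))"
    and chord: "\<And>i j. i < Suc ?n \<Longrightarrow> j < Suc ?n \<Longrightarrow> adj E ((x # p) ! i) ((x # p) ! j) \<Longrightarrow>
        j = Suc i mod Suc ?n \<or> i = Suc j mod Suc ?n"
    by (auto simp: is_induced_cycle_def is_cycle_def)
  have "adj E x (hd p)" using cyc[of 0] len by (cases p) auto
  moreover have "adj E x (last p)"
  proof -
    have "(x # p) ! ?n = last p" using len by (auto simp: last_conv_nth nth_Cons')
    then show ?thesis using cyc[of ?n] by (simp add: adj_sym)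
  qed
  moreover have "successively (adj E) p"
    unfolding successively_conv_nth
  proof (intro allI impI)
    fix k assume "Suc k < ?n"
    then show "adj E (p ! k) (p ! Suc k)" using cyc[of "Suc k"] by simp
  qed
  moreover have "j = Suc i \<or> i = Suc j" if "i < ?n" "j < ?n" "adj E (p ! i) (p ! j)" for i j
    using chord[of "Suc i" "Suc j"] that next_idx by (auto split: if_splits)
  moreover have "z = hd p \<or> z = last p" if "z \<in> set p" "adj E x z" for z
  proof -
    obtain k where k: "k < ?n" "z = p ! k" using \<open>z \<in> set p\<close> by (metis in_set_conv_nth)
    then have "k = 0 \<or> Suc k = ?n"
      using chord[of 0 "Suc k"] \<open>adj E x z\<close> next_idx len
        by (auto simp: of_bool_def split: if_splits)
    then show ?thesis using k len
      by (metis diff_Suc_1 hd_conv_nth last_conv_nth list.size(3) not_numeral_le_zero)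
  qed
  ultimately show ?thesis using len dist inV by (auto simp: induced_path_def apex_path_def)
qed

lemma induced_cycle_ConsI:
  assumes G: "simple_graph V E" and xV: "x \<in> V" and pV: "set p \<subseteq> V" and ap: "apex_path E x p"
  shows "is_induced_cycle V E (x # p)"
proof -
  let ?n = "length p"
  have len: "2 \<le> ?n" and x: "x \<notin> set p"
    and ip: "induced_path E p" and ends: "adj E x (hd p)" "adj E x (last p)"
    using ap by (auto simp: apex_path_def)
  have ne: "p \<noteq> []" using len by auto
  then have hd_last: "hd p = p ! 0" "last p = p ! (?n - 1)"
    by (simp_all add: hd_conv_nth last_conv_nth)
  have step: "\<And>k. Suc k < ?n \<Longrightarrow> adj E (p ! k) (p ! Suc k)"
    and chord: "\<And>i j. i < ?n \<Longrightarrow> j < ?n \<Longrightarrow> adj E (p ! i) (p ! j) \<Longrightarrow> j = Suc i \<or> i = Suc j"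
    and dist: "distinct p"
    using ip by (auto simp: induced_path_def successively_conv_nth)
  have cyc: "adj E ((x # p) ! i) ((x # p) ! (Suc i mod Suc ?n))" if "i < Suc ?n" for i
  proof (cases i)
    case 0
    then show ?thesis using ends hd_last ne by simp
  next
    case (Suc k)
    show ?thesis
    proof (cases "Suc k = ?n")
      case True
      then have "(x # p) ! i = p ! (?n - 1)" "Suc i mod Suc ?n = 0" using Suc
        by (auto simp flip: True)
      then show ?thesis using ends hd_last by (simp add: adj_sym)
    next
      case False
      then show ?thesis using step[of k] Suc that by simp
    qed
  qed
  have "j = Suc i mod Suc ?n \<or> i = Suc j mod Suc ?n"
    if ij: "i < Suc ?n" "j < Suc ?n" and a: "adj E ((x # p) ! i) ((x # p) ! j)" for i j
  proof (cases i)
    case 0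
    then obtain l where l: "j = Suc l" using a adj_irrefl[OF G] by (cases j) auto
    then have "l = 0 \<or> l = ?n - 1" using apex_path_adj_index[OF ap, of l] a 0 ij by auto
    then show ?thesis using 0 l len by auto
  next
    case (Suc k)
    show ?thesis
    proof (cases j)
      case 0
      then have "k = 0 \<or> k = ?n - 1" using apex_path_adj_index[OF ap, of k] a Suc ij
        by (auto simp: adj_sym)
      then show ?thesis using 0 Suc len by auto
    next
      case (Suc l)
      then show ?thesis using chord[of k l] a ij \<open>i = Suc k\<close> by auto
    qed
  qed
  then show ?thesis
    using cyc len x xV pV dist by (auto simp: is_induced_cycle_def is_cycle_def)
qed

lemma Suc_mod_inj: "a < n \<Longrightarrow> b < n \<Longrightarrow> Suc a mod n = Suc b mod n \<Longrightarrow> a = b"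
  by (auto simp: mod_Suc split: if_splits)

lemma induced_cycle_rotate1:
  assumes "is_induced_cycle V E cs"
  shows "is_induced_cycle V E (rotate1 cs)"
proof -
  let ?n = "length cs" and ?r = "rotate1 cs"
  define \<sigma> where "\<sigma> i = Suc i mod ?n" for i
  have n: "3 \<le> ?n" and dist: "distinct cs" and csV: "set cs \<subseteq> V"
    and cyc: "\<And>i. i < ?n \<Longrightarrow> adj E (cs ! i) (cs ! (Suc i mod ?n))"
    and chord: "\<And>i j. i < ?n \<Longrightarrow> j < ?n \<Longrightarrow> adj E (cs ! i) (cs ! j) \<Longrightarrow>
        j = Suc i mod ?n \<or> i = Suc j mod ?n"
    using assms by (auto simp: is_induced_cycle_def is_cycle_def)
  have pos: "0 < ?n" using n by linarith
  have \<sigma>_lt: "\<sigma> i < ?n" for i using pos by (simp add: \<sigma>_def)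
  have r_nth: "?r ! i = cs ! \<sigma> i" if "i < ?n" for i
    using that by (simp add: nth_rotate1 \<sigma>_def)
  have \<sigma>_Suc: "\<sigma> (Suc i mod ?n) = Suc (\<sigma> i) mod ?n" for i
    by (simp add: \<sigma>_def mod_Suc_eq)
  have \<sigma>_inj: "i = j" if "i < ?n" "j < ?n" "\<sigma> i = \<sigma> j" for i j
    using Suc_mod_inj that by (simp add: \<sigma>_def)
  have "adj E (?r ! i) (?r ! (Suc i mod ?n))" if "i < ?n" for i
    using cyc[OF \<sigma>_lt[of i]] that r_nth[OF mod_less_divisor[OF pos]] by (simp add: r_nth \<sigma>_Suc)
  moreover have "j = Suc i mod ?n \<or> i = Suc j mod ?n"
    if "i < ?n" "j < ?n" "adj E (?r ! i) (?r ! j)" for i j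
  proof -
    have "\<sigma> j = \<sigma> (Suc i mod ?n) \<or> \<sigma> i = \<sigma> (Suc j mod ?n)"
      using chord[OF \<sigma>_lt \<sigma>_lt, of i j] that by (simp add: r_nth \<sigma>_Suc)
    then show ?thesis using \<sigma>_inj that mod_less_divisor[OF pos] by blast
  qed
  ultimately show ?thesis
    using n dist csV by (auto simp: is_induced_cycle_def is_cycle_def)
qed

lemma induced_cycle_rotate: "is_induced_cycle V E cs \<Longrightarrow> is_induced_cycle V E (rotate k cs)"
  by (induction k) (simp_all add: induced_cycle_rotate1)

lemma induced_cycle_rotate_to:
  assumes "is_induced_cycle V E cs" "x \<in> set cs"
  obtains p where "is_induced_cycle V E (x # p)" "set (x # p) = set cs" "length (x # p) = length cs"
proof -
  obtain k where k: "k < length cs" "cs ! k = x" using assms(2) by (metis in_set_conv_nth)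
  have ne: "cs \<noteq> []" using k by auto
  then have "rotate k cs \<noteq> []" by simp
  moreover have "hd (rotate k cs) = x" using k ne by (simp add: hd_rotate_conv_nth)
  ultimately obtain p where "rotate k cs = x # p" by (cases "rotate k cs") auto
  then show ?thesis using that induced_cycle_rotate[OF assms(1), of k]
    by (metis length_rotate set_rotate)
qed

lemma induced_cycle_cong:
  assumes "\<And>a b. a \<in> set cs \<Longrightarrow> b \<in> set cs \<Longrightarrow> adj E a b \<longleftrightarrow> adj E' a b"
  shows "is_induced_cycle V E cs \<longleftrightarrow> is_induced_cycle V E' cs"
proof -
  have "adj E (cs ! i) (cs ! j) \<longleftrightarrow> adj E' (cs ! i) (cs ! j)"
    if "i < length cs" "j < length cs" for i j
    using assms that by simp
  moreover have "(i + 1) mod length cs < length cs" if "i < length cs" for i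
    using that by (metis less_nat_zero_code mod_less_divisor not_gr0)
  ultimately show ?thesis
    unfolding is_induced_cycle_def is_cycle_def by meson
qed

lemma chordal_apex_path_length:
  assumes "simple_graph V E" "chordal V E" "x \<in> V" "set p \<subseteq> V" "apex_path E x p"
  shows "length p = 2"
  using assms induced_cycle_ConsI[of V E x p] by (auto simp: chordal_def)

section \<open>Simplicial vertices\<close>

definition simplicial :: "'a set set \<Rightarrow> 'a \<Rightarrow> bool" where
  "simplicial E s \<longleftrightarrow> (\<forall>c d. adj E s c \<longrightarrow> adj E s d \<longrightarrow> c \<noteq> d \<longrightarrow> adj E c d)"

definition induced_edges :: "'a set set \<Rightarrow> 'a set \<Rightarrow> 'a set set" where
  "induced_edges E W = {e \<in> E. e \<subseteq> W}"

lemma adj_induced_edges: "adj (induced_edges E W) a b \<longleftrightarrow> adj E a b \<and> a \<in> W \<and> b \<in> W"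
  by (auto simp: adj_def induced_edges_def)

lemma simple_graph_induced_edges:
  assumes "simple_graph V E" "W \<subseteq> V"
  shows "simple_graph W (induced_edges E W)"
  using assms unfolding simple_graph_def induced_edges_def
  by (metis (no_types, lifting) finite_subset insert_subset mem_Collect_eq)

lemma chordal_induced_edges:
  assumes "chordal V E" "W \<subseteq> V"
  shows "chordal W (induced_edges E W)"
  unfolding chordal_def
proof (intro allI impI)
  fix cs assume cyc: "is_induced_cycle W (induced_edges E W) cs"
  then have "set cs \<subseteq> W" by (simp add: is_induced_cycle_def is_cycle_def)
  then have "adj E a b \<longleftrightarrow> adj (induced_edges E W) a b" if "a \<in> set cs" "b \<in> set cs" for a b
    using that by (auto simp: adj_induced_edges)
  then have "is_induced_cycle W E cs"
    using cyc induced_cycle_cong[of cs E "induced_edges E W"] by blast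
  then have "is_induced_cycle V E cs"
    using assms(2) by (auto simp: is_induced_cycle_def is_cycle_def)
  then show "length cs = 3" using assms(1) by (simp add: chordal_def)
qed

lemma simplicial_induced_edgesD:
  assumes "simplicial (induced_edges E W) s" "s \<in> W" "\<And>c. adj E s c \<Longrightarrow> c \<in> W"
  shows "simplicial E s"
  using assms unfolding simplicial_def adj_induced_edges by blast

lemma chordal_adj_if_linked_outside_neighbourhood:
  assumes G: "simple_graph V E" and ch: "chordal V E"
    and vs: "adj E v s" and vt: "adj E v t" and "s \<noteq> t"
    and w: "successively (adj E) w" "w \<noteq> []" "adj E s (hd w)" "adj E (last w) t" "set w \<subseteq> V"
    and avoid: "\<forall>z\<in>set w. z \<noteq> v \<and> \<not> adj E v z"
  shows "adj E s t"
proof (rule ccontr)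
  assume nst: "\<not> adj E s t"
  let ?xs = "s # w @ [t]"
  have "successively (adj E) ?xs"
    using w by (auto simp: successively_append_iff successively_Cons)
  then obtain p where p: "induced_path E p" "p \<noteq> []" "hd p = s" "last p = t" "set p \<subseteq> set ?xs"
    using walk_contains_induced_path[OF G] by (metis last_snoc list.sel(1) list.simps(3) last_ConsR
        append_is_Nil_conv)
  have "length p \<noteq> 1" using p \<open>s \<noteq> t\<close> by (cases p) auto
  moreover have "length p \<noteq> 2"
  proof
    assume "length p = 2"
    then obtain a b where "p = [a, b]" by (auto simp: numeral_2_eq_2 length_Suc_conv)
    then show False using p nst by (simp add: induced_path_def)
  qed
  moreover have "length p \<noteq> 0" using p(2) by simp
  ultimately have len: "3 \<le> length p" by arith
  \<comment> \<open>A shortest link from s to t outside the neighbourhood of v is closed by v to an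
    induced cycle of length at least four.\<close>
  have "v \<notin> set p" using p(5) avoid vs vt adj_irrefl[OF G] by force
  moreover have "\<forall>z\<in>set p. adj E v z \<longrightarrow> z = hd p \<or> z = last p" using p avoid by auto
  ultimately have "apex_path E v p"
    using p vs vt len by (simp add: apex_path_def)
  moreover have "set p \<subseteq> V"
    using p(5) w(5) adj_in_vertices[OF G vs] adj_in_vertices[OF G vt] by auto
  ultimately have "length p = 2"
    using chordal_apex_path_length[OF G ch] adj_in_vertices[OF G vs] by blast
  then show False using len by simp
qed

lemma chordal_component_with_clique_boundary:
  assumes G: "simple_graph V E" and ch: "chordal V E"
    and v: "v \<in> V" and a0: "a0 \<in> V" "a0 \<noteq> v" "\<not> adj E v a0"
  obtains A S where "a0 \<in> A" "A \<subseteq> V" "S \<subseteq> V" "v \<notin> A \<union> S"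
    "\<forall>a\<in>A. \<not> adj E v a" "\<forall>a\<in>A. \<forall>c. adj E a c \<longrightarrow> c \<in> A \<union> S"
    "\<forall>s\<in>S. \<forall>t\<in>S. s \<noteq> t \<longrightarrow> adj E s t"
proof -
  define far where "far = {a \<in> V. a \<noteq> v \<and> \<not> adj E v a}"
  define R where "R x y \<longleftrightarrow> adj E x y \<and> x \<in> far \<and> y \<in> far" for x y
  define A where "A = {a. R\<^sup>*\<^sup>* a0 a}"
  define S where "S = {s \<in> V - A. \<exists>a\<in>A. adj E a s}"
  have "a0 \<in> far" using a0 by (simp add: far_def)
  then have A_far: "A \<subseteq> far"
    unfolding A_def by (auto elim: rtranclp.cases simp: R_def)
  have boundary: "adj E a c \<Longrightarrow> a \<in> A \<Longrightarrow> c \<in> A \<union> S" for a c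
    using adj_in_vertices[OF G] by (auto simp: S_def)
  have S_nbr: "adj E v s" if "s \<in> S" for s
  proof (rule ccontr)
    assume "\<not> adj E v s"
    obtain a where a: "a \<in> A" "adj E a s" "s \<in> V" "s \<notin> A" using \<open>s \<in> S\<close> by (auto simp: S_def)
    then have "s \<noteq> v" using A_far by (auto simp: far_def adj_sym)
    then have "R a s" using a A_far \<open>\<not> adj E v s\<close> by (auto simp: R_def far_def)
    then show False using a unfolding A_def by (auto intro: rtranclp.rtrancl_into_rtrancl)
  qed
  have clique: "\<forall>s\<in>S. \<forall>t\<in>S. s \<noteq> t \<longrightarrow> adj E s t"
  proof (intro ballI impI)
    fix s t assume st: "s \<in> S" "t \<in> S" "s \<noteq> t"
    obtain a1 a2 where a: "a1 \<in> A" "adj E s a1" "a2 \<in> A" "adj E a2 t"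
      using st by (auto simp: S_def adj_sym)
    have "symp R" by (auto simp: symp_def R_def adj_sym)
    then have "R\<^sup>*\<^sup>* a1 a0"
      using a(1) sympD[OF symp_rtranclp] unfolding A_def by (metis mem_Collect_eq)
    then have "R\<^sup>*\<^sup>* a1 a2"
      using a(3) unfolding A_def by simp
    then obtain w where w: "successively R w" "w \<noteq> []" "hd w = a1" "last w = a2"
        "\<forall>z\<in>set w. R\<^sup>*\<^sup>* a1 z"
      by (rule rtranclp_imp_walk)
    have wA: "set w \<subseteq> A" using w(5) a(1) unfolding A_def by auto
    have "successively (adj E) w" using successively_mono[OF w(1)] by (auto simp: R_def)
    then show "adj E s t"
      using chordal_adj_if_linked_outside_neighbourhood[OF G ch S_nbr[OF st(1)] S_nbr[OF st(2)]
          st(3)]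
        w(2-4) a(2,4) wA A_far by (auto simp: far_def)
  qed
  have "v \<notin> A \<union> S" using A_far S_nbr adj_irrefl[OF G] by (auto simp: far_def)
  moreover have "a0 \<in> A" "S \<subseteq> V" by (auto simp: A_def S_def)
  moreover have "A \<subseteq> V" "\<forall>a\<in>A. \<not> adj E v a" using A_far by (auto simp: far_def)
  ultimately show ?thesis
    using that[of A S] boundary clique by blast
qed

lemma exists_simplicial_nonadjacent:
  assumes "simple_graph V E" "chordal V E" "v \<in> V" "a0 \<in> V" "a0 \<noteq> v" "\<not> adj E v a0"
  shows "\<exists>s\<in>V. s \<noteq> v \<and> \<not> adj E v s \<and> simplicial E s"
  using assms
proof (induction "card V" arbitrary: V E v a0 rule: less_induct)
  case less
  note G = less.prems(1) and ch = less.prems(2)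
  obtain A S where A: "a0 \<in> A" "A \<subseteq> V" "S \<subseteq> V" "v \<notin> A \<union> S" "\<forall>a\<in>A. \<not> adj E v a"
    and closed: "\<forall>a\<in>A. \<forall>c. adj E a c \<longrightarrow> c \<in> A \<union> S"
    and S: "\<forall>s\<in>S. \<forall>t\<in>S. s \<noteq> t \<longrightarrow> adj E s t"
    using chordal_component_with_clique_boundary[OF G ch less.prems(3-6)] by blast
  define W where "W = A \<union> S"
  define E' where "E' = induced_edges E W"
  have WV: "W \<subseteq> V" using A by (simp add: W_def)
  then have smaller: "card W < card V"
    using A(4) less.prems(3) G by (metis W_def psubsetI psubset_card_mono simple_graph_def)
  have G': "simple_graph W E'" and ch': "chordal W E'"
    unfolding E'_def using simple_graph_induced_edges[OF G WV] chordal_induced_edges[OF ch WV] .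
  have lift: "s \<in> V \<and> s \<noteq> v \<and> \<not> adj E v s \<and> simplicial E s" if "s \<in> A" "simplicial E' s" for s
    using that A closed simplicial_induced_edgesD[of E W s] by (auto simp: E'_def W_def)
  show ?case
  proof (cases "\<forall>w\<in>W. \<forall>b\<in>W. b \<noteq> w \<longrightarrow> adj E' w b")
    case True
    then have "simplicial E' a0" by (auto simp: simplicial_def E'_def adj_induced_edges)
    then show ?thesis using lift A(1) by blast
  next
    case False
    then obtain w b where wb: "w \<in> W" "b \<in> W" "b \<noteq> w" "\<not> adj E' w b" by blast
    obtain s1 where s1: "s1 \<in> W" "s1 \<noteq> w" "\<not> adj E' w s1" "simplicial E' s1"
      using less.hyps[OF smaller G' ch' wb] by blast
    obtain s2 where s2: "s2 \<in> W" "s2 \<noteq> s1" "\<not> adj E' s1 s2" "simplicial E' s2"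
      using less.hyps[OF smaller G' ch' s1(1) wb(1) s1(2)[symmetric]] s1(3) adj_sym by metis
    \<comment> \<open>S is a clique, so one of the two nonadjacent simplicial vertices lies in A.\<close>
    have "s1 \<in> A \<or> s2 \<in> A"
      using s1(1) s2(1-3) S by (auto simp: W_def E'_def adj_induced_edges)
    then show ?thesis using lift s1(4) s2(4) by blast
  qed
qed

lemma exists_simplicial:
  assumes G: "simple_graph V E" and ch: "chordal V E" and "V \<noteq> {}"
  shows "\<exists>s\<in>V. simplicial E s"
proof (cases "\<exists>v\<in>V. \<exists>a\<in>V. a \<noteq> v \<and> \<not> adj E v a")
  case True
  then show ?thesis using exists_simplicial_nonadjacent[OF G ch] by blast
next
  case False
  obtain v where "v \<in> V" using \<open>V \<noteq> {}\<close> by blast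
  moreover have "simplicial E v"
    using False adj_in_vertices[OF G] unfolding simplicial_def by metis
  ultimately show ?thesis by blast
qed

section \<open>Exposed edges\<close>

definition common_neighbours :: "'a set set \<Rightarrow> 'a \<Rightarrow> 'a \<Rightarrow> 'a set" where
  "common_neighbours E x y = {z. adj E x z \<and> adj E y z}"

lemma clique_extends_to_maximal:
  assumes G: "simple_graph V E" and D: "is_clique V E D"
  obtains C where "maximal_clique V E C" "D \<subseteq> C"
proof -
  have "finite {C. is_clique V E C}"
    using G by (auto simp: simple_graph_def is_clique_def intro: finite_subset[of _ "Pow V"])
  then obtain C where "is_clique V E C" "D \<subseteq> C" "\<forall>C'. is_clique V E C' \<longrightarrow> C \<subseteq> C' \<longrightarrow> C' = C"
    using finite_has_maximal2[of "{C. is_clique V E C}" D] D by auto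
  then show ?thesis using that[of C] unfolding maximal_clique_def by blast
qed

lemma edge_is_clique: "simple_graph V E \<Longrightarrow> adj E x y \<Longrightarrow> is_clique V E {x, y}"
  using adj_in_vertices by (fastforce simp: is_clique_def adj_sym)

lemma clique_containing_edge:
  "is_clique V E D \<Longrightarrow> {x, y} \<subseteq> D \<Longrightarrow> D \<subseteq> insert x (insert y (common_neighbours E x y))"
  by (auto simp: is_clique_def common_neighbours_def)

lemma exposed_edgeD:
  assumes G: "simple_graph V E" and xy: "adj E x y" and ex: "exposed_edge V E {x, y}"
  shows "common_neighbours E x y \<noteq> {}" "is_clique V E (common_neighbours E x y)"
proof -
  let ?N = "common_neighbours E x y"
  obtain C where C: "maximal_clique V E C" "{x, y} \<subseteq> C"
    using ex by (auto simp: exposed_edge_def)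
  have N_C: "?N \<subseteq> C"
  proof
    fix z assume z: "z \<in> ?N"
    then have "is_clique V E {x, y, z}"
      using edge_is_clique[OF G xy] adj_in_vertices[OF G]
      by (auto simp: is_clique_def common_neighbours_def adj_sym)
    then obtain Cz where "maximal_clique V E Cz" "{x, y, z} \<subseteq> Cz"
      using clique_extends_to_maximal[OF G] by metis
    then show "z \<in> C" using ex C by (auto simp: exposed_edge_def)
  qed
  have "C \<noteq> {x, y}" using ex C by (auto simp: exposed_edge_def facet_edge_def)
  then show "?N \<noteq> {}"
    using clique_containing_edge[of V E C x y] C by (auto simp: maximal_clique_def)
  show "is_clique V E ?N"
    using N_C C(1) unfolding maximal_clique_def is_clique_def by blast
qed

lemma exposed_edgeI:
  assumes G: "simple_graph V E" and xy: "adj E x y"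
    and N: "common_neighbours E x y \<noteq> {}" "is_clique V E (common_neighbours E x y)"
  shows "exposed_edge V E {x, y}"
proof -
  define C where "C = insert x (insert y (common_neighbours E x y))"
  have "is_clique V E C"
    unfolding is_clique_def
  proof (intro conjI ballI impI)
    show "C \<subseteq> V" using N(2) adj_in_vertices[OF G xy] by (simp add: C_def is_clique_def)
    fix a b assume "a \<in> C" "b \<in> C" "a \<noteq> b"
    then show "adj E a b"
      using N(2) xy adj_sym[of E] unfolding C_def is_clique_def common_neighbours_def by blast
  qed
  then have maxC: "maximal_clique V E C"
    using clique_containing_edge by (fastforce simp: maximal_clique_def C_def)
  moreover have "C' = C" if "maximal_clique V E C'" "{x, y} \<subseteq> C'" for C'
  proof -
    have "C' \<subseteq> C" using clique_containing_edge[of V E C' x y] that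
      by (simp add: maximal_clique_def C_def)
    then show ?thesis using that(1) \<open>is_clique V E C\<close> unfolding maximal_clique_def by blast
  qed
  moreover have "C \<noteq> {x, y}"
  proof -
    obtain z where "adj E x z" "adj E y z" using N(1) by (auto simp: common_neighbours_def)
    then have "z \<in> C" "z \<noteq> x" "z \<noteq> y"
      using adj_irrefl[OF G] by (auto simp: C_def common_neighbours_def)
    then show ?thesis by auto
  qed
  then have "\<not> facet_edge V E {x, y}"
    using maxC edge_is_clique[OF G xy] by (auto simp: facet_edge_def maximal_clique_def C_def)
  ultimately show ?thesis
    using xy by (auto simp: exposed_edge_def adj_def C_def)
qed

definition min_degree_two :: "'a set set \<Rightarrow> 'a set \<Rightarrow> bool" where
  "min_degree_two E U \<longleftrightarrow> (\<forall>u\<in>U. \<exists>a\<in>U. \<exists>b\<in>U. a \<noteq> b \<and> adj E u a \<and> adj E u b)"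

lemma cycle_min_degree_two:
  assumes "is_cycle V E cs"
  shows "min_degree_two E (set cs)"
  unfolding min_degree_two_def
proof
  let ?n = "length cs"
  fix u assume "u \<in> set cs"
  then obtain i where i: "i < ?n" "cs ! i = u" by (metis in_set_conv_nth)
  have n: "3 \<le> ?n" and dist: "distinct cs"
    and cyc: "\<And>k. k < ?n \<Longrightarrow> adj E (cs ! k) (cs ! (Suc k mod ?n))"
    using assms by (auto simp: is_cycle_def)
  define pred where "pred = (if i = 0 then ?n - 1 else i - 1)"
  have pred: "pred < ?n" "Suc pred mod ?n = i" using i n by (auto simp: pred_def)
  have "Suc i mod ?n \<noteq> pred" using i n by (auto simp: pred_def mod_Suc)
  moreover have succ: "Suc i mod ?n < ?n" using i(1)
    by (metis less_nat_zero_code mod_less_divisor not_gr0)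
  ultimately have "cs ! (Suc i mod ?n) \<noteq> cs ! pred"
    using nth_eq_iff_index_eq[OF dist _ pred(1)] by blast
  moreover have "adj E u (cs ! (Suc i mod ?n))" "adj E u (cs ! pred)"
    using cyc[OF i(1)] cyc[OF pred(1)] i pred by (auto simp: adj_sym)
  moreover have "cs ! (Suc i mod ?n) \<in> set cs" "cs ! pred \<in> set cs"
    using pred(1) succ by auto
  ultimately show "\<exists>a\<in>set cs. \<exists>b\<in>set cs. a \<noteq> b \<and> adj E u a \<and> adj E u b" by blast
qed

lemma exists_exposed_edge:
  assumes G: "simple_graph V E" and ch: "chordal V E" and cyc: "is_cycle V E cs"
  shows "\<exists>x y. adj E x y \<and> exposed_edge V E {x, y}"
proof -
  let ?F = "{U. U \<subseteq> V \<and> min_degree_two E U}"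
  have "finite ?F" using G by (auto simp: simple_graph_def intro: finite_subset[of _ "Pow V"])
  moreover have "set cs \<in> ?F" using cyc cycle_min_degree_two by (auto simp: is_cycle_def)
  ultimately obtain W where "W \<in> ?F" "set cs \<subseteq> W" and W_max: "\<forall>U\<in>?F. W \<subseteq> U \<longrightarrow> W = U"
    using finite_has_maximal2[of ?F "set cs"] by blast
  then have W: "W \<subseteq> V" "min_degree_two E W" "set cs \<subseteq> W" by auto
  have "W \<noteq> {}" using W(3) cyc by (auto simp: is_cycle_def)
  then obtain u where u: "u \<in> W" "simplicial (induced_edges E W) u"
    using exists_simplicial[OF simple_graph_induced_edges[OF G W(1)]
        chordal_induced_edges[OF ch W(1)]]
    by blast
  have simp_u: "adj E c d" if "c \<in> W" "d \<in> W" "adj E u c" "adj E u d" "c \<noteq> d" for c d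
    using u that by (auto simp: simplicial_def adj_induced_edges)
  obtain a b where ab: "a \<in> W" "b \<in> W" "a \<noteq> b" "adj E u a" "adj E u b"
    using W(2) u(1) by (auto simp: min_degree_two_def)
  have N_W: "common_neighbours E u a \<subseteq> W"
  proof
    fix z assume z: "z \<in> common_neighbours E u a"
    have "u \<noteq> a" using ab(4) adj_irrefl[OF G] by metis
    then have "min_degree_two E (insert z W)"
      using W(2) z u(1) ab(1) by (auto simp: min_degree_two_def common_neighbours_def adj_sym)
    moreover have "insert z W \<subseteq> V"
      using z W(1) adj_in_vertices[OF G] by (auto simp: common_neighbours_def)
    ultimately show "z \<in> W" using W_max by blast
  qed
  have "b \<in> common_neighbours E u a"
    using simp_u ab by (auto simp: common_neighbours_def adj_sym)
  moreover have "is_clique V E (common_neighbours E u a)"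
    using N_W W(1) simp_u unfolding is_clique_def common_neighbours_def by blast
  ultimately have "exposed_edge V E {u, a}"
    using exposed_edgeI[OF G ab(4)] by auto
  then show ?thesis using ab(4) by blast
qed

section \<open>Erasing an exposed edge\<close>

lemma apex_path_Diff_edge_prefix:
  assumes ap: "apex_path (E - {{x, y}}) x (as @ y # bs)" and xy: "adj E x y"
  shows "apex_path E x (as @ [y])"
proof -
  let ?E' = "E - {{x, y}}" and ?p = "as @ y # bs" and ?q = "as @ [y]"
  have x: "x \<notin> set ?p" and ip: "induced_path ?E' ?p" and first: "adj ?E' x (hd ?p)"
    and apex: "\<forall>z\<in>set ?p. adj ?E' x z \<longrightarrow> z = hd ?p \<or> z = last ?p"
    using ap by (simp_all add: apex_path_def)
  have "as \<noteq> []" using first by (auto simp: adj_Diff_edge)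
  then have hd_q: "hd ?q = hd ?p" by simp
  have agree: "adj ?E' a b \<longleftrightarrow> adj E a b" if "a \<in> set ?q" "b \<in> set ?q" for a b
    using x that by (auto simp: adj_Diff_edge doubleton_eq_iff)
  have "induced_path ?E' ?q" using induced_path_take[OF ip, of "Suc (length as)"] by simp
  then have ip_q: "induced_path E ?q" using induced_path_cong[OF agree] by blast
  have disj: "set as \<inter> set (y # bs) = {}" using ip by (simp add: induced_path_def)
  have apex_q: "\<forall>z\<in>set ?q. adj E x z \<longrightarrow> z = hd ?q \<or> z = last ?q"
  proof (intro ballI impI)
    fix z assume "z \<in> set ?q" "adj E x z"
    show "z = hd ?q \<or> z = last ?q"
    proof (cases "z = y")
      case False
      then have "z \<in> set as" "adj ?E' x z"
        using \<open>z \<in> set ?q\<close> \<open>adj E x z\<close> x by (auto simp: adj_Diff_edge doubleton_eq_iff)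
      moreover have "last ?p \<in> set (y # bs)" by (simp add: last_in_set)
      ultimately show ?thesis using apex hd_q disj by auto
    qed simp
  qed
  have "adj E x (hd ?q)" using first hd_q by (simp add: adj_Diff_edge)
  moreover have "2 \<le> length ?q" using \<open>as \<noteq> []\<close> by (cases as) auto
  ultimately show ?thesis
    using x ip_q xy apex_q unfolding apex_path_def by simp
qed

lemma chordal_apex_path_through_erased_edge:
  assumes G: "simple_graph V E" and ch: "chordal V E" and xy: "adj E x y"
    and xV: "x \<in> V" and pV: "set p \<subseteq> V" and ap: "apex_path (E - {{x, y}}) x p" and "y \<in> set p"
  obtains a b where "p = [a, y, b]"
proof -
  obtain as bs where p_split: "p = as @ y # bs" using \<open>y \<in> set p\<close> by (meson split_list)
  \<comment> \<open>Closed by the erased edge, either arc is an induced cycle of the chordal graph.\<close>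
  have "length (as @ [y]) = 2"
    using chordal_apex_path_length[OF G ch xV _ apex_path_Diff_edge_prefix[OF _ xy]] ap pV p_split
    by auto
  moreover have "length (rev bs @ [y]) = 2"
    using chordal_apex_path_length[OF G ch xV _ apex_path_Diff_edge_prefix[OF _ xy],
        of "rev bs" "rev as"] apex_path_rev[OF ap] pV p_split by auto
  ultimately show ?thesis
    using that p_split by (auto simp: numeral_2_eq_2 length_Suc_conv)
qed

lemma chordal_Diff_exposed_edge:
  assumes G: "simple_graph V E" and ch: "chordal V E"
    and xy: "adj E x y" and ex: "exposed_edge V E {x, y}"
  shows "chordal V (E - {{x, y}})"
  unfolding chordal_def
proof (intro allI impI)
  let ?E' = "E - {{x, y}}"
  fix cs assume cyc: "is_induced_cycle V ?E' cs"
  show "length cs = 3"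
  proof (cases "x \<in> set cs \<and> y \<in> set cs")
    case False
    then have "adj ?E' a b \<longleftrightarrow> adj E a b" if "a \<in> set cs" "b \<in> set cs" for a b
      using that by (auto simp: adj_Diff_edge doubleton_eq_iff)
    then have "is_induced_cycle V E cs" using cyc induced_cycle_cong by blast
    then show ?thesis using ch by (simp add: chordal_def)
  next
    case True
    then obtain p where p: "is_induced_cycle V ?E' (x # p)" "set (x # p) = set cs"
      "length (x # p) = length cs"
      using induced_cycle_rotate_to[OF cyc] by blast
    then have ap: "apex_path ?E' x p" and xV: "x \<in> V" and pV: "set p \<subseteq> V"
      using induced_cycle_ConsD[OF p(1)] by auto
    have "x \<noteq> y" using xy adj_irrefl[OF G] by metis
    then have "y \<in> set p" using True p(2) by auto
    then obtain a b where ayb: "p = [a, y, b]"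
      using chordal_apex_path_through_erased_edge[OF G ch xy xV pV ap] by blast
    have ip: "induced_path ?E' p" and "x \<notin> set p" "adj ?E' x a" "adj ?E' x b"
      using ap ayb by (auto simp: apex_path_def)
    moreover have "adj ?E' a y" "adj ?E' y b" "a \<noteq> b"
      using ip ayb by (auto simp: induced_path_def)
    ultimately have "a \<in> common_neighbours E x y" "b \<in> common_neighbours E x y" "a \<noteq> b"
      "a \<noteq> x" "b \<noteq> x"
      using ayb by (auto simp: common_neighbours_def adj_Diff_edge adj_sym)
    then have "adj ?E' a b"
      using exposed_edgeD(2)[OF G xy ex]
        by (auto simp: is_clique_def adj_Diff_edge doubleton_eq_iff)
    moreover have "\<not> adj ?E' (p ! 0) (p ! 2)"
      using ip ayb unfolding induced_path_def by fastforce
    ultimately show ?thesis using ayb by simp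
  qed
qed

lemma connected_Diff_exposed_edge:
  assumes G: "simple_graph V E" and c: "connected_graph V E"
    and xy: "adj E x y" and ex: "exposed_edge V E {x, y}"
  shows "connected_graph V (E - {{x, y}})"
proof -
  let ?R = "adj (E - {{x, y}})"
  obtain z where z: "adj E x z" "adj E y z"
    using exposed_edgeD(1)[OF G xy ex] by (auto simp: common_neighbours_def)
  then have "z \<noteq> x" "z \<noteq> y" using adj_irrefl[OF G] by metis+
  then have "?R x z" "?R z y" using z by (auto simp: adj_Diff_edge adj_sym doubleton_eq_iff)
  then have "?R\<^sup>*\<^sup>* x y" "?R\<^sup>*\<^sup>* y x"
    by (meson adj_sym converse_rtranclp_into_rtranclp r_into_rtranclp)+
  have "?R\<^sup>*\<^sup>* a b" if "adj E a b" for a b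
  proof (cases "{a, b} = {x, y}")
    case True
    then show ?thesis using \<open>?R\<^sup>*\<^sup>* x y\<close> \<open>?R\<^sup>*\<^sup>* y x\<close> by (auto simp: doubleton_eq_iff)
  next
    case False
    then show ?thesis using that by (simp add: adj_Diff_edge r_into_rtranclp)
  qed
  then have "adj E \<le> ?R\<^sup>*\<^sup>*" by blast
  then have "(adj E)\<^sup>*\<^sup>* \<le> ?R\<^sup>*\<^sup>*" using rtranclp_mono[of "adj E" "?R\<^sup>*\<^sup>*"] by simp
  then show ?thesis using c by (auto simp: connected_graph_def)
qed

lemma erasure_step:
  assumes G: "simple_graph V E" and c: "connected_graph V E" and ch: "chordal V E"
    and "\<not> acyclic_graph V E"
  obtains E' where "erasure V E E'" "card E' < card E"
    "simple_graph V E'" "connected_graph V E'" "chordal V E'"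
proof -
  obtain cs where "is_cycle V E cs" using assms(4) by (auto simp: acyclic_graph_def)
  then obtain x y where xy: "adj E x y" and ex: "exposed_edge V E {x, y}"
    using exists_exposed_edge[OF G ch] by blast
  let ?E' = "E - {{x, y}}"
  have "erasure V E ?E'" using ex by (auto simp: erasure_def)
  moreover have "card ?E' < card E"
    using card_Diff1_less[OF finite_edges[OF G]] xy by (simp add: adj_def)
  ultimately show ?thesis
    using that simple_graph_Diff[OF G] connected_Diff_exposed_edge[OF G c xy ex]
      chordal_Diff_exposed_edge[OF G ch xy ex] by blast
qed

theorem proposition2p10:
  fixes V :: "'a set" and E :: "'a set set"
  assumes "simple_graph V E" and "connected_graph V E" and "chordal V E"
  shows "\<exists>E'. (erasure V)\<^sup>*\<^sup>* E E' \<and> is_tree V E'"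
  using assms
proof (induction "card E" arbitrary: E rule: less_induct)
  case less
  show ?case
  proof (cases "acyclic_graph V E")
    case True
    then show ?thesis using less.prems(2) by (auto simp: is_tree_def)
  next
    case False
    then obtain E1 where E1: "erasure V E E1" "card E1 < card E"
      "simple_graph V E1" "connected_graph V E1" "chordal V E1"
      using erasure_step less.prems by blast
    then obtain E' where "(erasure V)\<^sup>*\<^sup>* E1 E'" "is_tree V E'"
      using less.hyps by blast
    then show ?thesis using E1(1) by (meson converse_rtranclp_into_rtranclp)
  qed
qed

end
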